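(* Let $S=\{x_1,\dots,x_n\}$ be a GCD closed set of positive integers with $x_1<x_2<\cdots<x_n$. (1) If $x_i\mid x_j$ for all $1\le i<j\le n$, then $[S]$ is nonsingular. (2) If the numbers $x_2/x_1,x_3/x_1,\dots,x_n/x_1$ are pairwise relatively prime, then $[S]$ is nonsingular. (3) If for each $k$ with $3\le k\le n$ there exists at most one index $i_k$ with $2\le i_k\le k-1$ and $x_{i_k}\mid x_k$, then $[S]$ is nonsingular.
   Context: $S$ is GCD closed if $\gcd(x,y)\in S$ for all $x,y\in S$. The LCM matrix $[S]$ has $(i,j)$ entry $\mathrm{lcm}(x_i,x_j)$. *)

theory Defs
  imports "Jordan_Normal_Form.Determinant"
begin

text \<open>The set S = {x_1,...,x_n} is represented by the sequence x 0 < x 1 < ... < x (n-1)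
  (0-based indexing: x_{i+1} in the paper is x i here).\<close>

definition gcd_closed :: "nat set \<Rightarrow> bool" where
  "gcd_closed S \<longleftrightarrow> (\<forall>a\<in>S. \<forall>b\<in>S. gcd a b \<in> S)"

definition lcm_matrix :: "nat \<Rightarrow> (nat \<Rightarrow> nat) \<Rightarrow> int mat" where
  "lcm_matrix n x = mat n n (\<lambda>(i,j). int (lcm (x i) (x j)))"

end

theory Submission
  imports Defs
begin

text \<open>Suppose every x k with k \<ge> 1 has, among its predecessors, a divisor x p that all
  other predecessors dividing x k divide. Gcd-closedness gives gcd (x k) (x j) = gcd (x p) (x j)
  for j < k, so off the diagonal row k of the LCM matrix is c = x k div x p times row p.
  Subtracting c times row p and expanding along row k shows that the determinant of the leading
  (k+1)-block is x k * (1 - c) times that of the leading k-block, with c > 1; by induction the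
  determinant never vanishes. The three hypotheses each provide such a divisor: x (k - 1) for a
  divisor chain, x 0 (the gcd of the whole set) for coprime quotients, and in the third case the
  unique x i dividing x k with 1 \<le> i < k, or x 0 if there is none.\<close>

lemma lcm_eq_mult_lcm_if_gcd_eq:
  fixes a b c y :: nat
  assumes gcd: "gcd a y = gcd b y" and a: "a = c * b"
  shows "lcm a y = c * lcm b y"
proof (cases "gcd a y = 0")
  case True
  then show ?thesis using gcd by simp
next
  case False
  have "gcd a y * lcm a y = c * (b * y)"
    using prod_gcd_lcm_nat[of a y] a by simp
  also have "\<dots> = gcd a y * (c * lcm b y)"
    using prod_gcd_lcm_nat[of b y] gcd by simp
  finally show ?thesis
    using mult_left_cancel[OF False] by blast
qed

lemma gcd_closed_obtain_gcd_index:
  fixes x :: "nat \<Rightarrow> nat"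
  assumes pos: "\<And>i. i < n \<Longrightarrow> 0 < x i"
    and incr: "\<And>i j. i < j \<Longrightarrow> j < n \<Longrightarrow> x i < x j"
    and gc: "gcd_closed (x ` {..<n})"
    and i: "i < n" and j: "j < n"
  obtains r where "r \<le> i" "r \<le> j" "gcd (x i) (x j) = x r"
proof -
  obtain r where r: "r < n" "gcd (x i) (x j) = x r"
    using gc i j unfolding gcd_closed_def by blast
  have "x r \<le> x i" using r(2) pos[OF i] gcd_le1_nat[of "x i" "x j"] by simp
  moreover have "x r \<le> x j" using r(2) pos[OF j] gcd_le2_nat[of "x j" "x i"] by simp
  ultimately have "\<not> i < r" "\<not> j < r"
    using incr[of i r] incr[of j r] r(1) by auto
  then have "r \<le> i" "r \<le> j" by simp_all
  with r show thesis by (intro that)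
qed

lemma gcd_closed_lessThan_Suc:
  fixes x :: "nat \<Rightarrow> nat"
  assumes pos: "\<And>i. i < Suc m \<Longrightarrow> 0 < x i"
    and incr: "\<And>i j. i < j \<Longrightarrow> j < Suc m \<Longrightarrow> x i < x j"
    and gc: "gcd_closed (x ` {..<Suc m})"
  shows "gcd_closed (x ` {..<m})"
  unfolding gcd_closed_def
proof (intro ballI)
  fix a b assume "a \<in> x ` {..<m}" "b \<in> x ` {..<m}"
  then obtain i j where ij: "i < m" "j < m" "a = x i" "b = x j" by auto
  then obtain r where "r \<le> i" "gcd (x i) (x j) = x r"
    by (metis gcd_closed_obtain_gcd_index[OF pos incr gc] less_Suc_eq)
  with ij show "gcd a b \<in> x ` {..<m}" by auto
qed

lemma gcd_closed_first_dvd: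
  fixes x :: "nat \<Rightarrow> nat"
  assumes pos: "\<And>i. i < n \<Longrightarrow> 0 < x i"
    and incr: "\<And>i j. i < j \<Longrightarrow> j < n \<Longrightarrow> x i < x j"
    and gc: "gcd_closed (x ` {..<n})"
    and j: "j < n"
  shows "x 0 dvd x j"
proof -
  obtain r where "r \<le> 0" "gcd (x 0) (x j) = x r"
    using gcd_closed_obtain_gcd_index[OF pos incr gc _ j] j by blast
  then have "gcd (x 0) (x j) = x 0" by simp
  then show ?thesis by (metis gcd_dvd2)
qed

lemma det_last_row_reduction:
  fixes A :: "'a :: comm_ring_1 mat"
  assumes A: "A \<in> carrier_mat (Suc m) (Suc m)" and p: "p < m"
    and row: "\<And>j. j < m \<Longrightarrow> A $$ (m, j) = c * A $$ (p, j)"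
  shows "det A = (A $$ (m, m) - c * A $$ (p, m)) * det (mat_delete A m m)"
proof -
  define B where "B = addrow (- c) m p A"
  have B: "B \<in> carrier_mat (Suc m) (Suc m)" using A by (simp add: B_def)
  have last_row: "B $$ (m, j) = 0" if "j < m" for j
    using A p that row[OF that] by (simp add: B_def)
  have delete: "mat_delete B m m = mat_delete A m m"
    using A B p by (intro eq_matI) (auto simp: B_def mat_delete_def)
  have "det A = det B"
    unfolding B_def using p by (intro det_addrow[OF _ _ A, symmetric]) auto
  also have "\<dots> = (\<Sum>j<Suc m. B $$ (m, j) * cofactor B m j)"
    using B by (intro laplace_expansion_row) auto
  also have "\<dots> = B $$ (m, m) * cofactor B m m"
    using last_row by simp
  also have "\<dots> = (A $$ (m, m) - c * A $$ (p, m)) * det (mat_delete A m m)"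
    using A p delete by (simp add: B_def cofactor_def)
  finally show ?thesis .
qed

lemma mat_delete_lcm_matrix_last: "mat_delete (lcm_matrix (Suc m) x) m m = lcm_matrix m x"
  by (intro eq_matI) (auto simp: mat_delete_def lcm_matrix_def)

definition has_greatest_divisor :: "(nat \<Rightarrow> nat) \<Rightarrow> nat \<Rightarrow> bool" where
  "has_greatest_divisor x k \<longleftrightarrow> (\<exists>p<k. x p dvd x k \<and> (\<forall>i<k. x i dvd x k \<longrightarrow> x i dvd x p))"

lemma gcd_eq_gcd_greatest_divisor:
  fixes x :: "nat \<Rightarrow> nat"
  assumes pos: "\<And>i. i < n \<Longrightarrow> 0 < x i"
    and incr: "\<And>i j. i < j \<Longrightarrow> j < n \<Longrightarrow> x i < x j"
    and gc: "gcd_closed (x ` {..<n})"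
    and k: "k < n" and p_dvd: "x p dvd x k"
    and greatest: "\<And>i. i < k \<Longrightarrow> x i dvd x k \<Longrightarrow> x i dvd x p"
    and j: "j < k"
  shows "gcd (x k) (x j) = gcd (x p) (x j)"
proof (rule dvd_antisym)
  obtain r where r: "r \<le> j" "gcd (x k) (x j) = x r"
    using gcd_closed_obtain_gcd_index[OF pos incr gc k, of j] j k by auto
  have "x r dvd x p"
    using r j greatest[of r] by (metis gcd_dvd1 le_less_trans)
  then show "gcd (x k) (x j) dvd gcd (x p) (x j)"
    using r(2) by (metis gcd_dvd2 gcd_greatest)
  show "gcd (x p) (x j) dvd gcd (x k) (x j)"
    using p_dvd by (meson dvd_trans gcd_dvd1 gcd_dvd2 gcd_greatest)
qed

lemma det_lcm_matrix_nonzero: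
  fixes x :: "nat \<Rightarrow> nat"
  assumes "\<And>i. i < n \<Longrightarrow> 0 < x i"
    and "\<And>i j. i < j \<Longrightarrow> j < n \<Longrightarrow> x i < x j"
    and "gcd_closed (x ` {..<n})"
    and "\<And>k. 0 < k \<Longrightarrow> k < n \<Longrightarrow> has_greatest_divisor x k"
  shows "det (lcm_matrix n x) \<noteq> 0"
  using assms
proof (induction n)
  case 0
  then show ?case by (simp add: lcm_matrix_def)
next
  case (Suc m)
  note pos = Suc.prems(1) and incr = Suc.prems(2) and gc = Suc.prems(3)
  have IH: "det (lcm_matrix m x) \<noteq> 0"
    using Suc.prems gcd_closed_lessThan_Suc[OF pos incr gc] by (intro Suc.IH) auto
  show ?case
  proof (cases "m = 0")
    case True
    then show ?thesis
      using pos det_single[of "lcm_matrix 1 x"] by (simp add: lcm_matrix_def)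
  next
    case False
    then obtain p where p: "p < m" "x p dvd x m"
      and greatest: "\<And>i. i < m \<Longrightarrow> x i dvd x m \<Longrightarrow> x i dvd x p"
      using Suc.prems(4)[of m] unfolding has_greatest_divisor_def by blast
    define c where "c = x m div x p"
    have xm: "x m = c * x p" using p(2) by (simp add: c_def)
    have "c \<noteq> 1" using xm incr[of p m] p(1) by auto
    then have diagonal: "int (x m) - int c * int (x m) \<noteq> 0"
      using pos[of m] by (simp add: algebra_simps)
    have row: "lcm_matrix (Suc m) x $$ (m, j) = int c * lcm_matrix (Suc m) x $$ (p, j)"
      if "j < m" for j
      using that p(1) lcm_eq_mult_lcm_if_gcd_eq[OF
          gcd_eq_gcd_greatest_divisor[OF pos incr gc _ p(2) greatest that] xm]
      by (simp add: lcm_matrix_def)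
    have "det (lcm_matrix (Suc m) x) = (int (x m) - int c * int (x m)) * det (lcm_matrix m x)"
      using det_last_row_reduction[OF _ p(1) row] p mat_delete_lcm_matrix_last
      by (simp add: lcm_matrix_def lcm_proj2_if_dvd)
    with diagonal IH show ?thesis by simp
  qed
qed

lemma has_greatest_divisor_if_dvd_chain:
  assumes chain: "\<And>i j. i < j \<Longrightarrow> j < n \<Longrightarrow> x i dvd x j"
    and k: "0 < k" "k < n"
  shows "has_greatest_divisor x k"
  unfolding has_greatest_divisor_def
proof (intro exI conjI allI impI)
  show "k - 1 < k" "x (k - 1) dvd x k" using k chain[of "k - 1" k] by auto
  show "x i dvd x (k - 1)" if "i < k" for i
    using that k chain[of i "k - 1"] by (cases "i = k - 1") auto
qed

lemma has_greatest_divisor_if_coprime_quotients: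
  fixes x :: "nat \<Rightarrow> nat"
  assumes pos: "\<And>i. i < n \<Longrightarrow> 0 < x i"
    and incr: "\<And>i j. i < j \<Longrightarrow> j < n \<Longrightarrow> x i < x j"
    and gc: "gcd_closed (x ` {..<n})"
    and coprime: "\<And>i j. 1 \<le> i \<Longrightarrow> i < j \<Longrightarrow> j < n \<Longrightarrow> coprime (x i div x 0) (x j div x 0)"
    and k: "0 < k" "k < n"
  shows "has_greatest_divisor x k"
  unfolding has_greatest_divisor_def
proof (intro exI conjI allI impI)
  show "0 < k" "x 0 dvd x k" using k gcd_closed_first_dvd[OF pos incr gc] by auto
  show "x i dvd x 0" if i: "i < k" and dvd: "x i dvd x k" for i
  proof (cases "i = 0")
    case False
    obtain a b where a: "x i = x 0 * a" and b: "x k = x 0 * b"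
      using i k gcd_closed_first_dvd[OF pos incr gc] by (meson dvdE order.strict_trans)
    have "0 < x 0" using pos k by simp
    then have "coprime a b" "a dvd b"
      using coprime[of i k] False i k dvd a b by auto
    then have "a = 1" by (metis coprime_common_divisor dvd_refl nat_dvd_1_iff_1)
    then show ?thesis using a incr[of 0 i] False i k by simp
  qed simp
qed

lemma has_greatest_divisor_if_card_le_1:
  fixes x :: "nat \<Rightarrow> nat"
  assumes pos: "\<And>i. i < n \<Longrightarrow> 0 < x i"
    and incr: "\<And>i j. i < j \<Longrightarrow> j < n \<Longrightarrow> x i < x j"
    and gc: "gcd_closed (x ` {..<n})"
    and card: "card {i. 1 \<le> i \<and> i < k \<and> x i dvd x k} \<le> 1"
    and k: "0 < k" "k < n"
  shows "has_greatest_divisor x k"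
proof -
  define Q where "Q = {i. 1 \<le> i \<and> i < k \<and> x i dvd x k}"
  have first: "x 0 dvd x i" if "i < n" for i
    using gcd_closed_first_dvd[OF pos incr gc that] .
  have unique: "i = q" if "i \<in> Q" "q \<in> Q" for i q
    using that card card_le_Suc0_iff_eq[of Q] unfolding Q_def by auto
  show ?thesis
  proof (cases "Q = {}")
    case True
    show ?thesis
      unfolding has_greatest_divisor_def
    proof (intro exI[of _ 0] conjI allI impI)
      show "0 < k" "x 0 dvd x k" using k first by auto
      show "x i dvd x 0" if "i < k" "x i dvd x k" for i
        using that True by (cases "i = 0") (auto simp: Q_def)
    qed
  next
    case False
    then obtain q where q: "q \<in> Q" by blast
    show ?thesis
      unfolding has_greatest_divisor_def
    proof (intro exI[of _ q] conjI allI impI)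
      show "q < k" "x q dvd x k" using q by (auto simp: Q_def)
      show "x i dvd x q" if "i < k" "x i dvd x k" for i
      proof (cases "i = 0")
        case True
        then show ?thesis using first q k by (simp add: Q_def)
      next
        case False
        then have "i \<in> Q" using that by (simp add: Q_def)
        then show ?thesis using unique[OF _ q] by simp
      qed
    qed
  qed
qed

theorem corollary4p7:
  fixes n :: nat and x :: "nat \<Rightarrow> nat"
  assumes pos: "\<And>i. i < n \<Longrightarrow> 0 < x i"
    and incr: "\<And>i j. i < j \<Longrightarrow> j < n \<Longrightarrow> x i < x j"
    and gc: "gcd_closed (x ` {..<n})"
  shows "((\<forall>i j. i < j \<and> j < n \<longrightarrow> x i dvd x j) \<longrightarrow> det (lcm_matrix n x) \<noteq> 0)
    \<and> ((\<forall>i j. 1 \<le> i \<and> i < j \<and> j < n \<longrightarrow> coprime (x i div x 0) (x j div x 0))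
         \<longrightarrow> det (lcm_matrix n x) \<noteq> 0)
    \<and> ((\<forall>k. 2 \<le> k \<and> k < n \<longrightarrow> card {i. 1 \<le> i \<and> i < k \<and> x i dvd x k} \<le> 1)
         \<longrightarrow> det (lcm_matrix n x) \<noteq> 0)"
proof -
  have nonsingular: "det (lcm_matrix n x) \<noteq> 0"
    if "\<And>k. 0 < k \<Longrightarrow> k < n \<Longrightarrow> has_greatest_divisor x k"
    using det_lcm_matrix_nonzero[OF pos incr gc that] .
  show ?thesis
  proof (intro conjI impI)
    assume "\<forall>i j. i < j \<and> j < n \<longrightarrow> x i dvd x j"
    then show "det (lcm_matrix n x) \<noteq> 0"
      by (intro nonsingular has_greatest_divisor_if_dvd_chain) auto
  next
    assume "\<forall>i j. 1 \<le> i \<and> i < j \<and> j < n \<longrightarrow> coprime (x i div x 0) (x j div x 0)"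
    then show "det (lcm_matrix n x) \<noteq> 0"
      by (intro nonsingular has_greatest_divisor_if_coprime_quotients[OF pos incr gc]) auto
  next
    assume card: "\<forall>k. 2 \<le> k \<and> k < n \<longrightarrow> card {i. 1 \<le> i \<and> i < k \<and> x i dvd x k} \<le> 1"
    have "card {i. 1 \<le> i \<and> i < k \<and> x i dvd x k} \<le> 1" if "0 < k" "k < n" for k
    proof (cases "k = 1")
      case True
      then have empty: "{i. 1 \<le> i \<and> i < k \<and> x i dvd x k} = {}" by auto
      show ?thesis by (simp only: empty card.empty le0)
    qed (use card that in auto)
    then show "det (lcm_matrix n x) \<noteq> 0"
      by (intro nonsingular has_greatest_divisor_if_card_le_1[OF pos incr gc])
  qed
qed

end
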